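(* Let $\theta>1$, $r\in(\theta^{-1},\theta^{-1/2}]$ and $s=\max\big(1,\frac{\ln\theta}{\ln(r\theta)}-2\big)$. There is a constant $C'>0$ depending only on $(s,\theta)$ such that the following holds. Let $p^*\in[1,\theta]$, suppose the random price sequence has maximum $P^*=p^*$ almost surely, and let $Y\sim\mathrm{Unif}([p^*(1-\epsilon'),p^*(1+\epsilon')])$ with $0<\epsilon'\le\min\{1-1/p^*,\ \theta/p^*-1\}$. Then \[ \frac{\mathbb{E}[\mathsf{A}^1_r(P,Y)]}{\mathbb{E}[P^*]}\ \ge\ \frac{1}{r\theta}\Big(1-\frac{s}{2}\epsilon'-C'\epsilon'^2\Big). \]
   Context: One-max search: fix $\theta>1$. Prices $p_1,\dots,p_n\in[1,\theta]$ are revealed one at a time; the algorithm receives at the start a prediction $y\in[1,\theta]$ of the maximum price. At each step it irrevocably accepts the current price (payoff = that price) or rejects it; if nothing is accepted the payoff is $1$. Let $\varphi_r(z)=\frac{r\theta-1}{1-r}+\frac{1-r^2\theta}{1-r}\cdot\frac{z}{r\theta}$ and $\Phi^1_r(z)=\max(r\theta,\varphi_r(z))$; $\mathsf{A}^1_r$ accepts the first price $p_i\ge\Phi^1_r(y)$, and $\mathsf{A}^1_r(P,Y)$ is its payoff on the realized prices and prediction. *)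

theory Defs
  imports "HOL-Probability.Probability"
begin

definition phi_r :: "real \<Rightarrow> real \<Rightarrow> real \<Rightarrow> real" where
  "phi_r \<theta> r z = (r * \<theta> - 1) / (1 - r) + (1 - r^2 * \<theta>) / (1 - r) * (z / (r * \<theta>))"

definition Phi1 :: "real \<Rightarrow> real \<Rightarrow> real \<Rightarrow> real" where
  "Phi1 \<theta> r z = max (r * \<theta>) (phi_r \<theta> r z)"

definition A1 :: "real \<Rightarrow> real \<Rightarrow> real list \<Rightarrow> real \<Rightarrow> real" where
  "A1 \<theta> r ps y = (case find (\<lambda>p. Phi1 \<theta> r y \<le> p) ps of Some p \<Rightarrow> p | None \<Rightarrow> 1)"

end

theory Submission
  imports Defs
begin

text \<open>Write x = r \<theta>. The threshold is the maximum of x and the line phi_r through (x, x) and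
  (\<theta>, \<theta> / x), whose slope lies in [0, 1 / x]; hence Phi1 y \<ge> y / x for y \<le> \<theta>.
  If p* \<le> x, every payoff is at least 1 \<ge> p* / x. Otherwise let c be the largest prediction in
  [p*, p*(1 + \<epsilon>')] whose threshold does not exceed p*: for Y \<le> c the algorithm accepts a price
  of at least Phi1 Y \<ge> Y / x, and for Y > c it still earns 1. Averaging this ramp over the
  uniform prediction loses at most (p* \<epsilon>')^2 / (2 (1 - slope)) against p* / x, and
  1 / (2 (1 - slope)) \<le> s follows from ln z \<le> z - 1 applied to z = x and z = \<theta> / x^2.
  The bound obtained has no quadratic term, so C' = 1 works.\<close>

lemma ln_ratio_bound:
  fixes x u :: real
  assumes "1 < x" "x \<le> u"
  shows "x * (1 - 1 / u) * ln x \<le> (x - 1) * ln u"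
proof -
  have u: "0 < u" using assms by linarith
  have ln_u: "ln u = ln x + ln (u / x)" using assms u by (simp add: ln_div)
  have "1 - x / u \<le> ln (u / x)"
    using ln_le_minus_one[of "x / u"] assms u by (simp add: ln_div)
  then have "(x - 1) * (1 - x / u) \<le> (x - 1) * ln (u / x)"
    using assms by (intro mult_left_mono) auto
  moreover have "0 \<le> (x - 1 - ln x) * (1 - x / u)"
    using ln_le_minus_one[of x] assms u by (intro mult_nonneg_nonneg) auto
  ultimately show ?thesis using u unfolding ln_u by (simp add: field_simps)
qed

lemma truncation_loss_le:
  fixes B E w :: real
  assumes "0 \<le> B" "B < 1" "0 \<le> w" "w \<le> E"
  shows "(E - w) * (B * w / (1 - B) + (E + w) / 2) \<le> E\<^sup>2 / (2 * (1 - B))"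
proof -
  have "E\<^sup>2 - (E - w) * (2 * B * w + (1 - B) * (E + w)) = B * (E - w)\<^sup>2 + w\<^sup>2"
    by (simp add: power2_eq_square algebra_simps)
  moreover have "0 \<le> B * (E - w)\<^sup>2 + w\<^sup>2" using assms by simp
  ultimately have "(E - w) * (2 * B * w + (1 - B) * (E + w)) \<le> E\<^sup>2" by linarith
  moreover have "(E - w) * (B * w / (1 - B) + (E + w) / 2)
      = (E - w) * (2 * B * w + (1 - B) * (E + w)) / (2 * (1 - B))"
    using assms by (simp add: field_simps)
  ultimately show ?thesis using assms by (simp add: divide_right_mono)
qed

lemma ramp_mean_ge:
  fixes p \<epsilon> c x s :: real
  assumes "0 < p" "0 < \<epsilon>" "0 < x" "c \<le> p * (1 + \<epsilon>)"
    and loss: "(p * (1 + \<epsilon>) - c) * ((p * (1 + \<epsilon>) + c) / 2 - x) \<le> s * (p * \<epsilon>)\<^sup>2"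
  shows "p / x * (1 - s / 2 * \<epsilon>)
    \<le> ((c\<^sup>2 - (p * (1 - \<epsilon>))\<^sup>2) / (2 * x) + (p * (1 + \<epsilon>) - c)) / (p * (1 + \<epsilon>) - p * (1 - \<epsilon>))"
proof -
  have "(c\<^sup>2 - (p * (1 - \<epsilon>))\<^sup>2) / 2 + x * (p * (1 + \<epsilon>) - c)
      = 2 * p\<^sup>2 * \<epsilon> - (p * (1 + \<epsilon>) - c) * ((p * (1 + \<epsilon>) + c) / 2 - x)"
    by (simp add: power2_eq_square field_simps)
  also have "\<dots> \<ge> 2 * p\<^sup>2 * \<epsilon> * (1 - s / 2 * \<epsilon>)"
    using loss by (simp add: power2_eq_square algebra_simps)
  finally have "2 * p\<^sup>2 * \<epsilon> * (1 - s / 2 * \<epsilon>) / (x * (2 * p * \<epsilon>))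
      \<le> ((c\<^sup>2 - (p * (1 - \<epsilon>))\<^sup>2) / 2 + x * (p * (1 + \<epsilon>) - c)) / (x * (2 * p * \<epsilon>))"
    using assms(1-3) by (intro divide_right_mono) auto
  moreover have "2 * p\<^sup>2 * \<epsilon> * (1 - s / 2 * \<epsilon>) / (x * (2 * p * \<epsilon>)) = p / x * (1 - s / 2 * \<epsilon>)"
    using assms(1-3) by (simp add: power2_eq_square)
  moreover have "((c\<^sup>2 - (p * (1 - \<epsilon>))\<^sup>2) / 2 + x * (p * (1 + \<epsilon>) - c)) / (x * (2 * p * \<epsilon>))
      = ((c\<^sup>2 - (p * (1 - \<epsilon>))\<^sup>2) / (2 * x) + (p * (1 + \<epsilon>) - c)) / (p * (1 + \<epsilon>) - p * (1 - \<epsilon>))"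
    using assms(1-3) by (simp add: field_simps)
  ultimately show ?thesis by simp
qed

lemma lborel_integral_uniform_ramp:
  fixes a b c x :: real
  assumes "a < b" "a \<le> c" "c \<le> b" "0 < x"
  defines "f \<equiv> \<lambda>y. indicator {a..b} y / measure lborel {a..b} * (if y \<le> c then y / x else 1)"
  shows "integrable lborel f" and "(\<integral>y. f y \<partial>lborel) = ((c\<^sup>2 - a\<^sup>2) / (2 * x) + (b - c)) / (b - a)"
proof -
  have f_eq: "f = (\<lambda>y. 1 / (b - a) * (indicator {a..c} y *\<^sub>R (y / x) + indicator {c<..b} y))"
    using assms(1-3) unfolding f_def by (auto simp: indicator_def fun_eq_iff)
  have "continuous_on {a..c} (\<lambda>y. y / x)"
    using assms(4) by (auto intro!: continuous_intros)
  then have ramp: "integrable lborel (\<lambda>y. indicator {a..c} y *\<^sub>R (y / x))"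
    using borel_integrable_atLeastAtMost' unfolding set_integrable_def by blast
  have step: "integrable lborel (indicator {c<..b} :: real \<Rightarrow> real)"
    using assms(3) by (simp add: integrable_indicator_iff)
  have "(\<integral>y. indicator {a..c} y *\<^sub>R (y / x) \<partial>lborel) = c\<^sup>2 / (2 * x) - a\<^sup>2 / (2 * x)"
  proof (rule integral_FTC_atLeastAtMost[OF \<open>a \<le> c\<close>])
    fix y
    show "((\<lambda>y. y\<^sup>2 / (2 * x)) has_vector_derivative y / x) (at y within {a..c})"
      unfolding has_real_derivative_iff_has_vector_derivative[symmetric]
      using assms(4) by (auto intro!: derivative_eq_intros simp: field_simps power2_eq_square)
  qed (use assms(4) in \<open>auto intro!: continuous_intros\<close>)
  moreover have "(\<integral>y. indicator {c<..b} y \<partial>lborel) = b - c"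
    using assms(3) by simp
  ultimately show "integrable lborel f" "(\<integral>y. f y \<partial>lborel) = ((c\<^sup>2 - a\<^sup>2) / (2 * x) + (b - c)) / (b - a)"
    unfolding f_eq using ramp step by (auto simp: diff_divide_distrib)
qed

lemma uniform_expectation_ramp:
  fixes a b c x :: real
  assumes Y: "distributed M lborel Y (\<lambda>y. indicator {a..b} y / measure lborel {a..b})"
    and "a < b" "a \<le> c" "c \<le> b" "0 < x"
  shows "integrable M (\<lambda>\<omega>. if Y \<omega> \<le> c then Y \<omega> / x else 1)"
    and "(\<integral>\<omega>. (if Y \<omega> \<le> c then Y \<omega> / x else 1) \<partial>M) = ((c\<^sup>2 - a\<^sup>2) / (2 * x) + (b - c)) / (b - a)"
proof -
  have density_nonneg: "0 \<le> indicator {a..b} y / measure lborel {a..b}" for y :: real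
    using \<open>a < b\<close> by simp
  have [measurable]: "(\<lambda>y. if y \<le> c then y / x else 1) \<in> borel_measurable lborel"
    by measurable
  show "integrable M (\<lambda>\<omega>. if Y \<omega> \<le> c then Y \<omega> / x else 1)"
    using distributed_integrable[OF Y] lborel_integral_uniform_ramp(1)[OF assms(2-5)] density_nonneg
    by simp
  show "(\<integral>\<omega>. (if Y \<omega> \<le> c then Y \<omega> / x else 1) \<partial>M) = ((c\<^sup>2 - a\<^sup>2) / (2 * x) + (b - c)) / (b - a)"
    using distributed_integral[OF Y] lborel_integral_uniform_ramp(2)[OF assms(2-5)] density_nonneg
    by simp
qed

lemma Max_image_mem_map:
  assumes "1 \<le> n"
  shows "Max (f ` {..<n}) \<in> set (map f [0..<n])"
  using assms by (auto intro!: Max_in simp: atLeast0LessThan lessThan_empty_iff)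

lemma A1_Nil: "A1 \<theta> r [] y = 1"
  by (simp add: A1_def)

lemma A1_Cons: "A1 \<theta> r (p # ps) y = (if Phi1 \<theta> r y \<le> p then p else A1 \<theta> r ps y)"
  by (simp add: A1_def)

lemma one_le_A1:
  assumes "1 \<le> r * \<theta>"
  shows "1 \<le> A1 \<theta> r ps y"
  using assms by (induction ps) (auto simp: A1_Nil A1_Cons Phi1_def)

lemma A1_mem: "A1 \<theta> r ps y \<in> insert 1 (set ps)"
  by (induction ps) (auto simp: A1_Nil A1_Cons)

lemma Phi1_le_A1:
  assumes "p \<in> set ps" "Phi1 \<theta> r y \<le> p"
  shows "Phi1 \<theta> r y \<le> A1 \<theta> r ps y"
  using assms by (induction ps) (auto simp: A1_Cons)

lemma borel_measurable_A1:
  assumes [measurable]: "Y \<in> borel_measurable M" "\<forall>i<n. (\<lambda>\<omega>. P \<omega> i) \<in> borel_measurable M"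
  shows "(\<lambda>\<omega>. A1 \<theta> r (map (P \<omega>) [0..<n]) (Y \<omega>)) \<in> borel_measurable M"
proof -
  have [measurable]: "(\<lambda>\<omega>. Phi1 \<theta> r (Y \<omega>)) \<in> borel_measurable M"
    unfolding Phi1_def phi_r_def by measurable
  have "(\<lambda>\<omega>. A1 \<theta> r (map (P \<omega>) js) (Y \<omega>)) \<in> borel_measurable M" if "\<forall>j\<in>set js. j < n" for js
    using that
  proof (induction js)
    case (Cons j js)
    then have [measurable]: "(\<lambda>\<omega>. P \<omega> j) \<in> borel_measurable M"
      and [measurable]: "(\<lambda>\<omega>. A1 \<theta> r (map (P \<omega>) js) (Y \<omega>)) \<in> borel_measurable M"
      using assms(2) by auto
    show ?case by (simp add: A1_Cons)
  qed (simp add: A1_Nil)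
  then show ?thesis by simp
qed

lemma (in finite_measure) integrable_A1:
  assumes "Y \<in> borel_measurable M" "\<forall>i<n. (\<lambda>\<omega>. P \<omega> i) \<in> borel_measurable M"
    and "\<forall>\<omega>\<in>space M. \<forall>i<n. P \<omega> i \<in> {1..b}"
  shows "integrable M (\<lambda>\<omega>. A1 \<theta> r (map (P \<omega>) [0..<n]) (Y \<omega>))"
proof (rule integrable_const_bound[where B = "max 1 b"])
  show "AE \<omega> in M. norm (A1 \<theta> r (map (P \<omega>) [0..<n]) (Y \<omega>)) \<le> max 1 b"
  proof (rule AE_I2)
    fix \<omega> assume "\<omega> \<in> space M"
    then have "set (map (P \<omega>) [0..<n]) \<subseteq> {1..b}"
      using assms(3) by auto
    then show "norm (A1 \<theta> r (map (P \<omega>) [0..<n]) (Y \<omega>)) \<le> max 1 b"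
      using A1_mem[of \<theta> r "map (P \<omega>) [0..<n]" "Y \<omega>"] by auto
  qed
qed (rule borel_measurable_A1[OF assms(1,2)])

locale one_max_regime =
  fixes \<theta> r :: real
  assumes theta_gt_1: "1 < \<theta>"
    and r_gt: "1 / \<theta> < r"
    and r_le: "r \<le> 1 / sqrt \<theta>"
begin

lemma theta_pos: "0 < \<theta>"
  using theta_gt_1 by simp

lemma r_pos: "0 < r"
  using r_gt theta_pos by (simp add: less_trans[of 0 "1 / \<theta>" r])

lemma one_lt_r_theta: "1 < r * \<theta>"
  using r_gt theta_pos by (simp add: field_simps)

lemma r_sq_theta_le_1: "r\<^sup>2 * \<theta> \<le> 1"
proof -
  have "r * sqrt \<theta> \<le> 1" using r_le theta_pos by (simp add: field_simps)
  then have "(r * sqrt \<theta>)\<^sup>2 \<le> 1" using r_pos theta_pos by (simp add: power_le_one)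
  then show ?thesis using theta_pos by (simp add: power_mult_distrib)
qed

lemma r_lt_1: "r < 1"
proof -
  have "r\<^sup>2 < 1\<^sup>2"
  proof (rule ccontr)
    assume "\<not> r\<^sup>2 < 1\<^sup>2"
    then have "1 * \<theta> \<le> r\<^sup>2 * \<theta>" using theta_pos by (intro mult_right_mono) auto
    then show False using r_sq_theta_le_1 theta_gt_1 by linarith
  qed
  then show ?thesis by (rule power_less_imp_less_base) simp
qed

lemma r_theta_sq_le: "(r * \<theta>)\<^sup>2 \<le> \<theta>"
  using mult_right_mono[OF r_sq_theta_le_1, of \<theta>] theta_pos
  by (simp add: power2_eq_square mult_ac)

definition slope :: real where
  "slope = (1 - r\<^sup>2 * \<theta>) / ((1 - r) * (r * \<theta>))"

lemma slope_nonneg: "0 \<le> slope"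
  unfolding slope_def using r_sq_theta_le_1 r_lt_1 one_lt_r_theta by simp

lemma slope_le: "slope \<le> 1 / (r * \<theta>)"
proof -
  have "1 - r\<^sup>2 * \<theta> \<le> 1 - r"
    using one_lt_r_theta r_pos by (simp add: power2_eq_square mult.assoc)
  then have "slope \<le> (1 - r) / ((1 - r) * (r * \<theta>))"
    unfolding slope_def using r_lt_1 one_lt_r_theta by (intro divide_right_mono) auto
  then show ?thesis
    using r_lt_1 by simp
qed

lemma slope_lt_1: "slope < 1"
  using slope_le one_lt_r_theta by (simp add: order_le_less_trans[of slope "1 / (r * \<theta>)" 1])

lemma phi_r_eq: "phi_r \<theta> r y = r * \<theta> + slope * (y - r * \<theta>)"
proof -
  define K where "K = (1 - r\<^sup>2 * \<theta>) / (1 - r)"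
  have "(r * \<theta> - 1) / (1 - r) = r * \<theta> - K"
    unfolding K_def using r_lt_1 by (simp add: field_simps power2_eq_square)
  moreover have "slope * (y - r * \<theta>) = K * (y / (r * \<theta>)) - K"
  proof -
    have "slope = K / (r * \<theta>)" unfolding slope_def K_def by simp
    then show ?thesis using r_pos theta_pos by (simp add: right_diff_distrib)
  qed
  ultimately show ?thesis
    unfolding phi_r_def K_def[symmetric] by linarith
qed

lemma phi_r_theta: "phi_r \<theta> r \<theta> = \<theta> / (r * \<theta>)"
proof -
  have "slope * (\<theta> - r * \<theta>) = (1 - r\<^sup>2 * \<theta>) / r"
    unfolding slope_def using r_lt_1 r_pos theta_pos by (simp add: field_simps)
  then show ?thesis
    unfolding phi_r_eq using r_pos theta_pos by (simp add: field_simps power2_eq_square)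
qed

lemma ratio_le_Phi1:
  assumes "y \<le> \<theta>"
  shows "y / (r * \<theta>) \<le> Phi1 \<theta> r y"
proof -
  define k where "k = 1 / (r * \<theta>)"
  have end_point: "k * \<theta> = r * \<theta> + slope * (\<theta> - r * \<theta>)"
    using phi_r_theta phi_r_eq[of \<theta>] unfolding k_def by simp
  have "y / (r * \<theta>) = k * y" unfolding k_def by simp
  then have "phi_r \<theta> r y - y / (r * \<theta>) = (k - slope) * (\<theta> - y)"
    unfolding phi_r_eq using end_point by (simp add: algebra_simps)
  moreover have "0 \<le> (k - slope) * (\<theta> - y)"
    using slope_le assms unfolding k_def by simp
  ultimately show ?thesis unfolding Phi1_def by linarith
qed

lemma half_inverse_one_minus_slope_le:
  "1 / (2 * (1 - slope)) \<le> max 1 (ln \<theta> / ln (r * \<theta>) - 2)"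
proof -
  define x where "x = r * \<theta>"
  define R where "R = (1 - r) * x / (x - 1)"
  have "1 < x" "x * x \<le> \<theta>"
    using one_lt_r_theta r_theta_sq_le unfolding x_def by (simp_all add: power2_eq_square)
  then have x: "1 < x" "x \<le> \<theta> / x"
    by (simp_all add: pos_le_divide_eq)
  have "(1 - r) * x \<noteq> 0" using r_lt_1 x by simp
  then have "1 - slope = ((1 - r) * x - (1 - r\<^sup>2 * \<theta>)) / ((1 - r) * x)"
    unfolding slope_def x_def by (simp add: diff_divide_distrib)
  also have "(1 - r) * x - (1 - r\<^sup>2 * \<theta>) = x - 1"
    unfolding x_def by (simp add: algebra_simps power2_eq_square)
  finally have half_R: "1 / (2 * (1 - slope)) = R / 2"
    unfolding R_def by simp
  have "x * (1 - 1 / (\<theta> / x)) * ln x \<le> (x - 1) * ln (\<theta> / x)"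
    using ln_ratio_bound[OF x] .
  moreover have "1 - 1 / (\<theta> / x) = 1 - r"
    unfolding x_def using theta_pos by simp
  moreover have "ln (\<theta> / x) = ln \<theta> - ln x"
    using theta_pos x by (simp add: ln_div)
  ultimately have "(1 - r) * x * ln x \<le> (x - 1) * (ln \<theta> - ln x)"
    by (simp add: mult_ac)
  then have "(1 - r) * x * ln x / (x - 1) \<le> ln \<theta> - ln x"
    using x by (simp add: pos_divide_le_eq mult_ac)
  then have "R * ln x \<le> ln \<theta> - ln x"
    unfolding R_def by simp
  moreover have "0 < ln x" using x by simp
  ultimately have "R \<le> (ln \<theta> - ln x) / ln x"
    by (simp add: pos_le_divide_eq)
  then have "R \<le> ln \<theta> / ln x - 1"
    using \<open>0 < ln x\<close> by (simp add: diff_divide_distrib)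
  then show ?thesis
    unfolding half_R x_def[symmetric] le_max_iff_disj by linarith
qed

lemma crossing_loss_le:
  assumes "0 < slope" "r * \<theta> < p" "r * \<theta> + (p - r * \<theta>) / slope < p + E"
  defines "q \<equiv> r * \<theta> + (p - r * \<theta>) / slope"
  shows "p \<le> q" and "(p + E - q) * ((p + E + q) / 2 - r * \<theta>) \<le> E\<^sup>2 / (2 * (1 - slope))"
proof -
  define w where "w = q - p"
  have "slope * (p - r * \<theta>) \<le> p - r * \<theta>"
    using mult_right_mono[of slope 1 "p - r * \<theta>"] slope_lt_1 assms(2) by simp
  then have "p - r * \<theta> \<le> (p - r * \<theta>) / slope"
    using assms(1) by (simp add: pos_le_divide_eq mult.commute)
  then show "p \<le> q"
    unfolding q_def by simp
  then have w: "0 \<le> w" "w \<le> E"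
    using assms(3) unfolding w_def q_def by auto
  have "p - r * \<theta> = slope * w / (1 - slope)"
    unfolding w_def q_def using assms(1) slope_lt_1 by (simp add: field_simps)
  moreover have "(p + E + q) / 2 - r * \<theta> = (p - r * \<theta>) + (E + w) / 2" and "p + E - q = E - w"
    unfolding w_def by (simp_all add: field_simps)
  ultimately have "(p + E - q) * ((p + E + q) / 2 - r * \<theta>)
      = (E - w) * (slope * w / (1 - slope) + (E + w) / 2)"
    by simp
  also have "\<dots> \<le> E\<^sup>2 / (2 * (1 - slope))"
    using truncation_loss_le[OF slope_nonneg slope_lt_1 w] .
  finally show "(p + E - q) * ((p + E + q) / 2 - r * \<theta>) \<le> E\<^sup>2 / (2 * (1 - slope))" .
qed

lemma truncation_point:
  assumes "r * \<theta> < p" "0 \<le> E"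
  obtains c where "p \<le> c" "c \<le> p + E" "\<And>y. y \<le> c \<Longrightarrow> Phi1 \<theta> r y \<le> p"
    "(p + E - c) * ((p + E + c) / 2 - r * \<theta>) \<le> max 1 (ln \<theta> / ln (r * \<theta>) - 2) * E\<^sup>2"
proof -
  \<comment> \<open>the threshold line reaches p at the prediction r \<theta> + (p - r \<theta>) / slope\<close>
  define q where "q = (if slope = 0 then p + E else min (p + E) (r * \<theta> + (p - r * \<theta>) / slope))"
  have below_q: "Phi1 \<theta> r y \<le> p" if "y \<le> q" for y
  proof (cases "slope = 0")
    case False
    then have "slope * (y - r * \<theta>) \<le> slope * ((p - r * \<theta>) / slope)"
      using that slope_nonneg unfolding q_def by (intro mult_left_mono) auto
    with False show ?thesis
      unfolding Phi1_def phi_r_eq using assms by simp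
  qed (use assms in \<open>simp add: Phi1_def phi_r_eq\<close>)
  have "p \<le> q \<and> (p + E - q) * ((p + E + q) / 2 - r * \<theta>) \<le> E\<^sup>2 / (2 * (1 - slope))"
  proof (cases "slope = 0 \<or> p + E \<le> r * \<theta> + (p - r * \<theta>) / slope")
    case True
    then show ?thesis
      using assms slope_lt_1 unfolding q_def by auto
  next
    case False
    then show ?thesis
      using crossing_loss_le[of p E] slope_nonneg assms unfolding q_def by auto
  qed
  moreover have "E\<^sup>2 / (2 * (1 - slope)) \<le> max 1 (ln \<theta> / ln (r * \<theta>) - 2) * E\<^sup>2"
    using mult_right_mono[OF half_inverse_one_minus_slope_le, of "E\<^sup>2"] by simp
  moreover have "q \<le> p + E"
    unfolding q_def by simp
  ultimately show ?thesis
    using below_q by (intro that[of q]) auto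
qed

lemma ramp_le_A1:
  assumes "p \<in> set ps" "c \<le> \<theta>" "\<And>y. y \<le> c \<Longrightarrow> Phi1 \<theta> r y \<le> p"
  shows "(if y \<le> c then y / (r * \<theta>) else 1) \<le> A1 \<theta> r ps y"
proof (cases "y \<le> c")
  case True
  then have "y / (r * \<theta>) \<le> Phi1 \<theta> r y"
    using assms(2) by (intro ratio_le_Phi1) simp
  also have "\<dots> \<le> A1 \<theta> r ps y"
    using assms True by (intro Phi1_le_A1) auto
  finally show ?thesis using True by simp
qed (use one_le_A1 one_lt_r_theta in auto)

lemma ramp_mean_le_expected_A1:
  assumes "prob_space M" "1 \<le> n"
    and "\<forall>i<n. (\<lambda>\<omega>. P \<omega> i) \<in> borel_measurable M"
    and "\<forall>\<omega>\<in>space M. \<forall>i<n. P \<omega> i \<in> {1..\<theta>}"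
    and "AE \<omega> in M. Max (P \<omega> ` {..<n}) = p"
    and Y: "distributed M lborel Y (\<lambda>y. indicator {a..b} y / measure lborel {a..b})"
    and "a < b" "a \<le> c" "c \<le> b" "b \<le> \<theta>" "\<And>y. y \<le> c \<Longrightarrow> Phi1 \<theta> r y \<le> p"
  shows "((c\<^sup>2 - a\<^sup>2) / (2 * (r * \<theta>)) + (b - c)) / (b - a)
    \<le> (\<integral>\<omega>. A1 \<theta> r (map (P \<omega>) [0..<n]) (Y \<omega>) \<partial>M)"
proof -
  interpret prob_space M by fact
  have "0 < r * \<theta>" using one_lt_r_theta by simp
  note ramp = uniform_expectation_ramp[OF Y \<open>a < b\<close> \<open>a \<le> c\<close> \<open>c \<le> b\<close> this]
  have "(\<integral>\<omega>. (if Y \<omega> \<le> c then Y \<omega> / (r * \<theta>) else 1) \<partial>M)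
      \<le> (\<integral>\<omega>. A1 \<theta> r (map (P \<omega>) [0..<n]) (Y \<omega>) \<partial>M)"
    using ramp(1)
  proof (rule integral_mono_AE)
    have "Y \<in> borel_measurable M"
      using distributed_measurable[OF Y] by simp
    then show "integrable M (\<lambda>\<omega>. A1 \<theta> r (map (P \<omega>) [0..<n]) (Y \<omega>))"
      using assms(3,4) by (rule integrable_A1)
    show "AE \<omega> in M. (if Y \<omega> \<le> c then Y \<omega> / (r * \<theta>) else 1) \<le> A1 \<theta> r (map (P \<omega>) [0..<n]) (Y \<omega>)"
      using assms(5)
    proof eventually_elim
      case (elim \<omega>)
      then have "p \<in> set (map (P \<omega>) [0..<n])"
        using Max_image_mem_map[OF \<open>1 \<le> n\<close>, of "P \<omega>"] by simp
      then show ?case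
        using ramp_le_A1 assms(9-11) by simp
    qed
  qed
  then show ?thesis
    using ramp(2) by simp
qed

lemma expected_A1_ge:
  assumes "prob_space M" "1 \<le> n"
    and P_meas: "\<forall>i<n. (\<lambda>\<omega>. P \<omega> i) \<in> borel_measurable M"
    and P_range: "\<forall>\<omega>\<in>space M. \<forall>i<n. P \<omega> i \<in> {1..\<theta>}"
    and max_eq: "AE \<omega> in M. Max (P \<omega> ` {..<n}) = p"
    and "0 < \<epsilon>" "\<epsilon> \<le> min (1 - 1 / p) (\<theta> / p - 1)" "1 \<le> p"
    and Y: "distributed M lborel Y
      (\<lambda>y. indicator {p * (1 - \<epsilon>) .. p * (1 + \<epsilon>)} y / measure lborel {p * (1 - \<epsilon>) .. p * (1 + \<epsilon>)})"
  shows "p / (r * \<theta>) * (1 - max 1 (ln \<theta> / ln (r * \<theta>) - 2) / 2 * \<epsilon>)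
    \<le> (\<integral>\<omega>. A1 \<theta> r (map (P \<omega>) [0..<n]) (Y \<omega>) \<partial>M)"
    (is "?bound \<le> integral\<^sup>L M ?A")
proof -
  interpret prob_space M by fact
  have Y_meas: "Y \<in> borel_measurable M"
    using distributed_measurable[OF Y] by simp
  show ?thesis
  proof (cases "p \<le> r * \<theta>")
    case True
    have "?bound \<le> p / (r * \<theta>)"
      using \<open>0 < \<epsilon>\<close> \<open>1 \<le> p\<close> one_lt_r_theta by (intro mult_left_le) auto
    also have "\<dots> \<le> 1"
      using True one_lt_r_theta by simp
    also have "1 \<le> integral\<^sup>L M ?A"
      using integrable_A1[OF Y_meas P_meas P_range] one_le_A1 one_lt_r_theta
      by (intro integral_ge_const AE_I2) auto
    finally show ?thesis .
  next
    case False
    define a b where "a = p * (1 - \<epsilon>)" and "b = p * (1 + \<epsilon>)"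
    have "r * \<theta> < p" "0 \<le> p * \<epsilon>" and b_eq: "p + p * \<epsilon> = b"
      using False \<open>0 < \<epsilon>\<close> \<open>1 \<le> p\<close> unfolding b_def by (auto simp: distrib_left)
    then obtain c where "p \<le> c" "c \<le> b" and below_c: "\<And>y. y \<le> c \<Longrightarrow> Phi1 \<theta> r y \<le> p"
      and loss: "(b - c) * ((b + c) / 2 - r * \<theta>) \<le> max 1 (ln \<theta> / ln (r * \<theta>) - 2) * (p * \<epsilon>)\<^sup>2"
      using truncation_point[of p "p * \<epsilon>"] unfolding b_eq by blast
    have "a < b" "a \<le> c"
      using \<open>p \<le> c\<close> \<open>c \<le> b\<close> \<open>0 < \<epsilon>\<close> \<open>1 \<le> p\<close> mult_pos_pos[of p \<epsilon>] unfolding a_def b_def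
      by (auto simp: algebra_simps)
    have "\<epsilon> + 1 \<le> \<theta> / p"
      using \<open>\<epsilon> \<le> min (1 - 1 / p) (\<theta> / p - 1)\<close> by simp
    then have "b \<le> \<theta>"
      using \<open>1 \<le> p\<close> unfolding b_def by (simp add: pos_le_divide_eq mult.commute add.commute)
    have "?bound \<le> ((c\<^sup>2 - a\<^sup>2) / (2 * (r * \<theta>)) + (b - c)) / (b - a)"
      using ramp_mean_ge[of p \<epsilon> "r * \<theta>" c] loss \<open>c \<le> b\<close> \<open>0 < \<epsilon>\<close> \<open>1 \<le> p\<close> one_lt_r_theta
      unfolding a_def b_def by simp
    also have "\<dots> \<le> integral\<^sup>L M ?A"
      by (rule ramp_mean_le_expected_A1[OF \<open>prob_space M\<close> \<open>1 \<le> n\<close> P_meas P_range max_eq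
            Y[folded a_def b_def] \<open>a < b\<close> \<open>a \<le> c\<close> \<open>c \<le> b\<close> \<open>b \<le> \<theta>\<close> below_c])
    finally show ?thesis .
  qed
qed

lemma competitive_ratio_ge:
  assumes "prob_space M" "1 \<le> n"
    and "\<forall>i<n. (\<lambda>\<omega>. P \<omega> i) \<in> borel_measurable M"
    and "\<forall>\<omega>\<in>space M. \<forall>i<n. P \<omega> i \<in> {1..\<theta>}"
    and "p \<in> {1..\<theta>}" "AE \<omega> in M. Max (P \<omega> ` {..<n}) = p"
    and "0 < \<epsilon>" "\<epsilon> \<le> min (1 - 1 / p) (\<theta> / p - 1)"
    and "distributed M lborel Y
      (\<lambda>y. indicator {p * (1 - \<epsilon>) .. p * (1 + \<epsilon>)} y / measure lborel {p * (1 - \<epsilon>) .. p * (1 + \<epsilon>)})"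
  shows "1 / (r * \<theta>) * (1 - max 1 (ln \<theta> / ln (r * \<theta>) - 2) / 2 * \<epsilon>)
    \<le> (\<integral>\<omega>. A1 \<theta> r (map (P \<omega>) [0..<n]) (Y \<omega>) \<partial>M) / (\<integral>\<omega>. Max (P \<omega> ` {..<n}) \<partial>M)"
proof -
  interpret prob_space M by fact
  have "(\<lambda>\<omega>. Max (P \<omega> ` {..<n})) \<in> borel_measurable M"
    using borel_measurable_Max[of "{..<n}" "\<lambda>i \<omega>. P \<omega> i" M] assms(3) by simp
  then have "(\<integral>\<omega>. Max (P \<omega> ` {..<n}) \<partial>M) = (\<integral>\<omega>. p \<partial>M)"
    using assms(6) by (intro integral_cong_AE) auto
  then have "(\<integral>\<omega>. Max (P \<omega> ` {..<n}) \<partial>M) = p"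
    by (simp add: prob_space)
  moreover have "p / (r * \<theta>) * (1 - max 1 (ln \<theta> / ln (r * \<theta>) - 2) / 2 * \<epsilon>)
      \<le> (\<integral>\<omega>. A1 \<theta> r (map (P \<omega>) [0..<n]) (Y \<omega>) \<partial>M)"
    using assms by (intro expected_A1_ge) auto
  ultimately show ?thesis
    using assms(5) by (simp add: pos_le_divide_eq mult_ac)
qed

end

theorem corollary5:
  fixes \<theta> :: real
  assumes "\<theta> > 1"
  shows "\<exists>C :: real \<Rightarrow> real.
    \<forall>r. 1 / \<theta> < r \<and> r \<le> 1 / sqrt \<theta> \<longrightarrow>
      (let s = max 1 (ln \<theta> / ln (r * \<theta>) - 2) in
        C s > 0 \<and>
        (\<forall>(M :: 'a measure) (n :: nat) (P :: 'a \<Rightarrow> nat \<Rightarrow> real) (Y :: 'a \<Rightarrow> real)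
            (pstar :: real) (\<epsilon> :: real).
          prob_space M \<longrightarrow> n \<ge> 1 \<longrightarrow>
          (\<forall>i<n. (\<lambda>\<omega>. P \<omega> i) \<in> borel_measurable M) \<longrightarrow>
          (\<forall>\<omega>\<in>space M. \<forall>i<n. P \<omega> i \<in> {1..\<theta>}) \<longrightarrow>
          pstar \<in> {1..\<theta>} \<longrightarrow>
          (AE \<omega> in M. Max ((P \<omega>) ` {..<n}) = pstar) \<longrightarrow>
          0 < \<epsilon> \<longrightarrow> \<epsilon> \<le> min (1 - 1 / pstar) (\<theta> / pstar - 1) \<longrightarrow>
          distributed M lborel Y
            (\<lambda>y. indicator {pstar * (1 - \<epsilon>) .. pstar * (1 + \<epsilon>)} y
                  / measure lborel {pstar * (1 - \<epsilon>) .. pstar * (1 + \<epsilon>)}) \<longrightarrow>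
          (\<integral>\<omega>. A1 \<theta> r (map (P \<omega>) [0..<n]) (Y \<omega>) \<partial>M)
            / (\<integral>\<omega>. Max ((P \<omega>) ` {..<n}) \<partial>M)
          \<ge> 1 / (r * \<theta>) * (1 - s / 2 * \<epsilon> - C s * \<epsilon>^2)))"
proof (intro exI[of _ "\<lambda>_. 1"] allI impI, unfold Let_def, intro conjI allI impI)
  fix r p \<epsilon> :: real and M :: "'a measure" and n :: nat and P :: "'a \<Rightarrow> nat \<Rightarrow> real"
    and Y :: "'a \<Rightarrow> real"
  assume "1 / \<theta> < r \<and> r \<le> 1 / sqrt \<theta>"
  then interpret one_max_regime \<theta> r
    using assms by unfold_locales auto
  assume hyps: "prob_space M" "1 \<le> n" "\<forall>i<n. (\<lambda>\<omega>. P \<omega> i) \<in> borel_measurable M"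
    "\<forall>\<omega>\<in>space M. \<forall>i<n. P \<omega> i \<in> {1..\<theta>}" "p \<in> {1..\<theta>}" "AE \<omega> in M. Max (P \<omega> ` {..<n}) = p"
    "0 < \<epsilon>" "\<epsilon> \<le> min (1 - 1 / p) (\<theta> / p - 1)"
    "distributed M lborel Y (\<lambda>y. indicator {p * (1 - \<epsilon>) .. p * (1 + \<epsilon>)} y
       / measure lborel {p * (1 - \<epsilon>) .. p * (1 + \<epsilon>)})"
  have "1 / (r * \<theta>) * (1 - max 1 (ln \<theta> / ln (r * \<theta>) - 2) / 2 * \<epsilon> - 1 * \<epsilon>\<^sup>2)
      \<le> 1 / (r * \<theta>) * (1 - max 1 (ln \<theta> / ln (r * \<theta>) - 2) / 2 * \<epsilon>)"
    using one_lt_r_theta by (intro mult_left_mono) auto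
  also have "\<dots> \<le> (\<integral>\<omega>. A1 \<theta> r (map (P \<omega>) [0..<n]) (Y \<omega>) \<partial>M) / (\<integral>\<omega>. Max (P \<omega> ` {..<n}) \<partial>M)"
    using competitive_ratio_ge[OF hyps] .
  finally show "1 / (r * \<theta>) * (1 - max 1 (ln \<theta> / ln (r * \<theta>) - 2) / 2 * \<epsilon> - 1 * \<epsilon>\<^sup>2)
      \<le> (\<integral>\<omega>. A1 \<theta> r (map (P \<omega>) [0..<n]) (Y \<omega>) \<partial>M) / (\<integral>\<omega>. Max (P \<omega> ` {..<n}) \<partial>M)" .
qed simp

end
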